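(* At every point $R\in V_N$ with $q(R)>0$, the Cartan tensor $C_{pqr}=\frac12\partial g_{pq}/\partial R^r$ of the Finsleroid metric function satisfies $$C_tC^t=\frac{N^2}{4K^2}\,g^2,$$ and, if $g\neq0$, $$C_{pqr}=\frac1N\Big(h_{pq}C_r+h_{pr}C_q+h_{qr}C_p-\frac{1}{C_sC^s}C_pC_qC_r\Big).$$
   Context: Let $N\ge2$, $V_N=\mathbb{R}^N$ with points $R=(R^1,\dots,R^N)$, $Z=R^N$; indices $a,b$ run over $1,\dots,N-1$, indices $p,q,r,s,t$ over $1,\dots,N$, repeated indices summed. Fix a symmetric positive-definite matrix $(r_{ab})$, $q(R)=\sqrt{r_{ab}R^aR^b}$. Fix $g\in(-2,2)$, $h=\sqrt{1-g^2/4}$, $G=g/h$. Define $B(g;R)=Z^2+gqZ+q^2$, $A(g;R)=Z+\frac12gq$, $\Phi(g;R)=\arctan(A/(hq))$ for $q>0$ ($\Phi=\pm\pi/2$ if $q=0$, $Z\gtrless0$), $J=e^{\frac12G\Phi}$, and $K(g;R)=\sqrt{B}\,J$. Let $g_{pq}=\frac12\partial^2K^2/\partial R^p\partial R^q$ with inverse $g^{pq}$, $R_p=\frac12\partial K^2/\partial R^p$, angular metric tensor $h_{pq}=g_{pq}-R_pR_q/K^2$, $C_p=g^{qr}C_{pqr}$, $C^p=g^{pq}C_q$. *)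

theory Defs
  imports "HOL-Analysis.Analysis"
begin

text \<open>Points of V_N are vectors R :: real^'n with N = CARD('n). A distinguished index
  z :: 'n plays the role of the last coordinate Z = R^N; the remaining indices play the
  role of a, b = 1..N-1. The matrix (r_ab) is rr :: 'n => 'n => real (only its entries
  with a, b ~= z matter). gg is the Finsleroid parameter g.\<close>

definition qf :: "('n::finite \<Rightarrow> 'n \<Rightarrow> real) \<Rightarrow> 'n \<Rightarrow> real^'n \<Rightarrow> real" where
  "qf rr z R = sqrt (\<Sum>a\<in>UNIV - {z}. \<Sum>b\<in>UNIV - {z}. rr a b * R$a * R$b)"

definition hh :: "real \<Rightarrow> real" where
  "hh gg = sqrt (1 - gg^2 / 4)"

definition GG :: "real \<Rightarrow> real" where
  "GG gg = gg / hh gg"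

definition Bf :: "('n::finite \<Rightarrow> 'n \<Rightarrow> real) \<Rightarrow> 'n \<Rightarrow> real \<Rightarrow> real^'n \<Rightarrow> real" where
  "Bf rr z gg R = (R$z)^2 + gg * qf rr z R * R$z + (qf rr z R)^2"

definition Af :: "('n::finite \<Rightarrow> 'n \<Rightarrow> real) \<Rightarrow> 'n \<Rightarrow> real \<Rightarrow> real^'n \<Rightarrow> real" where
  "Af rr z gg R = R$z + 1/2 * gg * qf rr z R"

definition Phif :: "('n::finite \<Rightarrow> 'n \<Rightarrow> real) \<Rightarrow> 'n \<Rightarrow> real \<Rightarrow> real^'n \<Rightarrow> real" where
  "Phif rr z gg R =
     (if qf rr z R > 0 then arctan (Af rr z gg R / (hh gg * qf rr z R))
      else if R$z > 0 then pi/2 else - pi/2)"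

definition Jf :: "('n::finite \<Rightarrow> 'n \<Rightarrow> real) \<Rightarrow> 'n \<Rightarrow> real \<Rightarrow> real^'n \<Rightarrow> real" where
  "Jf rr z gg R = exp (1/2 * GG gg * Phif rr z gg R)"

definition Kf :: "('n::finite \<Rightarrow> 'n \<Rightarrow> real) \<Rightarrow> 'n \<Rightarrow> real \<Rightarrow> real^'n \<Rightarrow> real" where
  "Kf rr z gg R = sqrt (Bf rr z gg R) * Jf rr z gg R"

definition partial :: "(real^'n::finite \<Rightarrow> real) \<Rightarrow> 'n \<Rightarrow> real^'n \<Rightarrow> real" where
  "partial f p R = deriv (\<lambda>t. f (R + t *\<^sub>R axis p 1)) 0"

definition metric :: "('n::finite \<Rightarrow> 'n \<Rightarrow> real) \<Rightarrow> 'n \<Rightarrow> real \<Rightarrow> 'n \<Rightarrow> 'n \<Rightarrow> real^'n \<Rightarrow> real" where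
  "metric rr z gg p q R =
     1/2 * partial (\<lambda>S. partial (\<lambda>T. (Kf rr z gg T)^2) q S) p R"

definition gmat :: "('n::finite \<Rightarrow> 'n \<Rightarrow> real) \<Rightarrow> 'n \<Rightarrow> real \<Rightarrow> real^'n \<Rightarrow> real^'n^'n" where
  "gmat rr z gg R = (\<chi> p q. metric rr z gg p q R)"

definition ginv :: "('n::finite \<Rightarrow> 'n \<Rightarrow> real) \<Rightarrow> 'n \<Rightarrow> real \<Rightarrow> real^'n \<Rightarrow> real^'n^'n" where
  "ginv rr z gg R = matrix_inv (gmat rr z gg R)"

definition Rlow :: "('n::finite \<Rightarrow> 'n \<Rightarrow> real) \<Rightarrow> 'n \<Rightarrow> real \<Rightarrow> 'n \<Rightarrow> real^'n \<Rightarrow> real" where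
  "Rlow rr z gg p R = 1/2 * partial (\<lambda>T. (Kf rr z gg T)^2) p R"

definition angular :: "('n::finite \<Rightarrow> 'n \<Rightarrow> real) \<Rightarrow> 'n \<Rightarrow> real \<Rightarrow> 'n \<Rightarrow> 'n \<Rightarrow> real^'n \<Rightarrow> real" where
  "angular rr z gg p q R =
     metric rr z gg p q R - Rlow rr z gg p R * Rlow rr z gg q R / (Kf rr z gg R)^2"

definition cartan :: "('n::finite \<Rightarrow> 'n \<Rightarrow> real) \<Rightarrow> 'n \<Rightarrow> real \<Rightarrow> 'n \<Rightarrow> 'n \<Rightarrow> 'n \<Rightarrow> real^'n \<Rightarrow> real" where
  "cartan rr z gg p q r R = 1/2 * partial (\<lambda>S. metric rr z gg p q S) r R"

definition Clow :: "('n::finite \<Rightarrow> 'n \<Rightarrow> real) \<Rightarrow> 'n \<Rightarrow> real \<Rightarrow> 'n \<Rightarrow> real^'n \<Rightarrow> real" where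
  "Clow rr z gg p R = (\<Sum>q\<in>UNIV. \<Sum>r\<in>UNIV. ginv rr z gg R $ q $ r * cartan rr z gg p q r R)"

definition Cup :: "('n::finite \<Rightarrow> 'n \<Rightarrow> real) \<Rightarrow> 'n \<Rightarrow> real \<Rightarrow> 'n \<Rightarrow> real^'n \<Rightarrow> real" where
  "Cup rr z gg p R = (\<Sum>q\<in>UNIV. ginv rr z gg R $ p $ q * Clow rr z gg q R)"

end

theory Submission
  imports Defs
begin

(* Write K^2 = B E with E = J^2 = exp (G arctan ((Z + g q/2) / (h q))). Since
   d log E = g (q dZ - Z dq) / B, every derivative of K^2 along a coordinate line is an explicit
   rational expression in Z, q, w_p = r_pb R^b, e_p = delta_pz and r_pq. Differentiating three
   times gives R_p, g_pq and
     C_pqr = 1/2 (h_pq gamma_r + h_pr gamma_q + h_qr gamma_p - E g P_p P_q P_r / (q^3 B^2)),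
   where P_p = q^2 e_p - Z w_p and gamma_p = g P_p / (q B) = d_p log E.
   Put c_p = (N/2) gamma_p. The vector c^p = N g (B e^p - (Z + g q) R^p) / (2 E q B) satisfies
   g_pq c^q = c_p and R_p c^p = 0, and c_p c^p = N^2 g^2 / (4 K^2), so C_pqr is
   (1/N) (h_pq c_r + h_pr c_q + h_qr c_p - c_p c_q c_r / (c_s c^s)). Contracting with g^qr, using
   h_pq c^q = c_p and g^qr h_qr = N - 1, yields C_p = c_p; hence C^p = c^p and both claims follow.
   The metric tensor is invertible because (r_ab) is positive definite. *)

section \<open>Linear algebra\<close>

lemma matrix_inv_inverse:
  fixes A :: "'a::field^'n^'n"
  assumes "invertible A"
  shows "A ** matrix_inv A = mat 1" and "matrix_inv A ** A = mat 1"
proof -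
  have "\<exists>A'. A ** A' = mat 1 \<and> A' ** A = mat 1" using assms by (simp add: invertible_def)
  then have "A ** matrix_inv A = mat 1 \<and> matrix_inv A ** A = mat 1"
    unfolding matrix_inv_def by (rule someI_ex)
  then show "A ** matrix_inv A = mat 1" and "matrix_inv A ** A = mat 1" by auto
qed

lemma matrix_inv_mult_vector:
  fixes A :: "'a::field^'n^'n"
  assumes "invertible A" and "A *v x = y"
  shows "matrix_inv A *v y = x"
  using assms by (metis matrix_inv_inverse(2) matrix_vector_mul_assoc matrix_vector_mul_lid)

lemma symmetric_matrix_inv:
  fixes A :: "'a::field^'n^'n"
  assumes "invertible A" and "transpose A = A"
  shows "transpose (matrix_inv A) = matrix_inv A"
proof -
  have "transpose (matrix_inv A) ** A = mat 1"
    using matrix_inv_inverse(1)[OF assms(1)] assms(2)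
    by (metis matrix_transpose_mul transpose_mat)
  then have "transpose (matrix_inv A) = transpose (matrix_inv A) ** (A ** matrix_inv A)"
    using matrix_inv_inverse(1)[OF assms(1)] by simp
  also have "\<dots> = matrix_inv A"
    by (simp add: matrix_mul_assoc \<open>transpose (matrix_inv A) ** A = mat 1\<close>)
  finally show ?thesis .
qed

lemma invertible_iff_kernel_trivial:
  fixes A :: "'a::field^'n^'n"
  shows "invertible A \<longleftrightarrow> (\<forall>x. A *v x = 0 \<longrightarrow> x = 0)"
  by (simp add: invertible_left_inverse matrix_left_invertible_ker)

lemma symmetric_matrix_entry:
  assumes "transpose A = A"
  shows "A $ i $ j = A $ j $ i"
proof -
  have "transpose A $ j $ i = A $ j $ i" using assms by simp
  then show ?thesis by (simp add: transpose_def)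
qed

lemma trace_inverse_product:
  fixes A :: "'a::field^'n^'n"
  assumes "invertible A" and "transpose A = A"
  shows "(\<Sum>q\<in>UNIV. \<Sum>r\<in>UNIV. matrix_inv A $ q $ r * A $ q $ r) = of_nat CARD('n)"
proof -
  have "(\<Sum>r\<in>UNIV. matrix_inv A $ q $ r * A $ q $ r) = (matrix_inv A ** A) $ q $ q" for q
    using symmetric_matrix_entry[OF assms(2)] by (simp add: matrix_matrix_mult_def)
  then show ?thesis using matrix_inv_inverse(2)[OF assms(1)] by (simp add: mat_def)
qed

lemma trace_inverse_angular:
  fixes G :: "real^'n^'n" and l y :: "real^'n"
  assumes G: "invertible G" "transpose G = G"
    and y: "G *v y = l" "l \<bullet> y \<noteq> 0"
  shows "(\<Sum>q\<in>UNIV. \<Sum>r\<in>UNIV. matrix_inv G $ q $ r * (G$q$r - l$q * l$r / (l \<bullet> y)))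
    = real CARD('n) - 1"
proof -
  have Gi_l: "(\<Sum>r\<in>UNIV. matrix_inv G $ q $ r * l$r) = y$q" for q
    using matrix_inv_mult_vector[OF G(1) y(1)] by (auto simp: matrix_vector_mult_def vec_eq_iff)
  have "(\<Sum>q\<in>UNIV. \<Sum>r\<in>UNIV. matrix_inv G $ q $ r * (G$q$r - l$q * l$r / (l \<bullet> y)))
      = (\<Sum>q\<in>UNIV. \<Sum>r\<in>UNIV. matrix_inv G $ q $ r * G$q$r)
        - (\<Sum>q\<in>UNIV. l$q * (\<Sum>r\<in>UNIV. matrix_inv G $ q $ r * l$r)) / (l \<bullet> y)"
    by (simp add: right_diff_distrib sum_subtractf sum_distrib_left sum_divide_distrib mult_ac)
  also have "\<dots> = real CARD('n) - 1"
    using trace_inverse_product[OF G] y(2) by (simp add: Gi_l inner_vec_def)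
  finally show ?thesis .
qed

lemma contraction_of_cartan_form:
  fixes G :: "real^'n^'n" and l y c cu :: "real^'n"
    and H :: "'n \<Rightarrow> 'n \<Rightarrow> real" and C :: "'n \<Rightarrow> 'n \<Rightarrow> 'n \<Rightarrow> real"
  assumes G: "invertible G" "transpose G = G"
    and y: "G *v y = l" "l \<bullet> y \<noteq> 0"
    and cu: "G *v cu = c" "l \<bullet> cu = 0" "c \<bullet> cu \<noteq> 0"
    and H: "\<And>p q. H p q = G$p$q - l$p * l$q / (l \<bullet> y)"
    and C: "\<And>p q r. C p q r = 1 / real CARD('n) *
       (H p q * c$r + H p r * c$q + H q r * c$p - 1 / (c \<bullet> cu) * c$p * c$q * c$r)"
  shows "(\<Sum>q\<in>UNIV. \<Sum>r\<in>UNIV. matrix_inv G $ q $ r * C p q r) = c$p"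
proof -
  define Gi where "Gi = matrix_inv G"
  define N where "N = real CARD('n)"
  have Gi_c: "(\<Sum>r\<in>UNIV. Gi$q$r * c$r) = cu$q" for q
    using matrix_inv_mult_vector[OF G(1) cu(1)] by (auto simp: Gi_def matrix_vector_mult_def vec_eq_iff)
  have Gi_c': "(\<Sum>q\<in>UNIV. Gi$q$r * c$q) = cu$r" for r
    using Gi_c[of r] symmetric_matrix_entry[OF symmetric_matrix_inv[OF G]] by (simp add: Gi_def)
  have H_cu: "(\<Sum>q\<in>UNIV. H p q * cu$q) = c$p" for p
  proof -
    have "(\<Sum>q\<in>UNIV. H p q * cu$q) = (\<Sum>q\<in>UNIV. G$p$q * cu$q) - l$p / (l \<bullet> y) * (l \<bullet> cu)"
      by (simp add: H inner_vec_def left_diff_distrib sum_subtractf sum_distrib_left mult.assoc)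
    also have "\<dots> = c$p" using cu(1,2) by (simp add: matrix_vector_mult_def vec_eq_iff)
    finally show ?thesis .
  qed
  have trace_H: "(\<Sum>q\<in>UNIV. \<Sum>r\<in>UNIV. Gi$q$r * H q r) = N - 1"
    unfolding H Gi_def N_def by (rule trace_inverse_angular[OF G y])
  define \<kappa> where "\<kappa> = c \<bullet> cu"
  have entry: "Gi$q$r * C p q r = 1/N * (H p q * (Gi$q$r * c$r) + H p r * (Gi$q$r * c$q)
      + c$p * (Gi$q$r * H q r) - c$p / \<kappa> * (c$q * (Gi$q$r * c$r)))" for q r
    by (simp add: C N_def \<kappa>_def algebra_simps)
  have row: "(\<Sum>r\<in>UNIV. Gi$q$r * C p q r) = 1/N * (H p q * cu$q + (\<Sum>r\<in>UNIV. H p r * (Gi$q$r * c$q))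
      + c$p * (\<Sum>r\<in>UNIV. Gi$q$r * H q r) - c$p / \<kappa> * (c$q * cu$q))" for q
    unfolding entry by (simp only: sum.distrib sum_subtractf sum_distrib_left[symmetric] Gi_c)
  have swapped: "(\<Sum>q\<in>UNIV. \<Sum>r\<in>UNIV. H p r * (Gi$q$r * c$q)) = c$p"
  proof -
    have "(\<Sum>q\<in>UNIV. \<Sum>r\<in>UNIV. H p r * (Gi$q$r * c$q)) = (\<Sum>r\<in>UNIV. H p r * (\<Sum>q\<in>UNIV. Gi$q$r * c$q))"
      by (subst sum.swap) (simp only: sum_distrib_left)
    then show ?thesis by (simp only: Gi_c' H_cu)
  qed
  have "(\<Sum>q\<in>UNIV. \<Sum>r\<in>UNIV. Gi$q$r * C p q r)
      = 1/N * (c$p + c$p + c$p * (N - 1) - c$p / \<kappa> * (c \<bullet> cu))"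
    by (simp only: row sum_distrib_left[symmetric] sum.distrib sum_subtractf H_cu swapped trace_H
        inner_vec_def inner_real_def)
  also have "\<dots> = c$p"
    using cu(3) by (simp add: \<kappa>_def N_def field_simps)
  finally show ?thesis unfolding Gi_def .
qed

lemma linear_system_trivial_solution:
  fixes a b c d x y :: real
  assumes "a*x + b*y = 0" and "c*x + d*y = 0" and "a*d - b*c \<noteq> 0"
  shows "x = 0" and "y = 0"
proof -
  have "(a*d - b*c) * x = d * (a*x + b*y) - b * (c*x + d*y)"
    and "(a*d - b*c) * y = a * (c*x + d*y) - c * (a*x + b*y)"
    by (simp_all add: algebra_simps)
  then have "(a*d - b*c) * x = 0" and "(a*d - b*c) * y = 0"
    using assms(1,2) by simp_all
  with assms(3) show "x = 0" and "y = 0" by simp_all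
qed

section \<open>The Finsleroid metric function as a function of \<open>Z\<close> and \<open>q\<close>\<close>

text \<open>The arguments \<open>w\<close>, \<open>e\<close> and \<open>r\<close> below stand for \<open>r\<^sub>p\<^sub>b R\<^sup>b\<close>, \<open>\<delta>\<^sub>p\<^sub>z\<close> and
  \<open>r\<^sub>p\<^sub>q\<close>. For \<open>q > 0\<close>, \<open>E_of\<close> is \<open>J\<^sup>2\<close>, and \<open>K2_of\<close>, \<open>Rlow_of\<close>, \<open>metric_of\<close>,
  \<open>angular_of\<close>, \<open>cartan_of\<close> are \<open>K\<^sup>2\<close>, \<open>R\<^sub>p\<close>, \<open>g\<^sub>p\<^sub>q\<close>, \<open>h\<^sub>p\<^sub>q\<close>, \<open>C\<^sub>p\<^sub>q\<^sub>r\<close>.\<close>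

definition B_of :: "real \<Rightarrow> real \<Rightarrow> real \<Rightarrow> real" where
  "B_of g Z q = Z^2 + g*q*Z + q^2"

definition E_of :: "real \<Rightarrow> real \<Rightarrow> real \<Rightarrow> real" where
  "E_of g Z q = exp (GG g * arctan ((Z + g*q/2) / (hh g * q)))"

definition K2_of :: "real \<Rightarrow> real \<Rightarrow> real \<Rightarrow> real" where
  "K2_of g Z q = B_of g Z q * E_of g Z q"

definition Rlow_of :: "real \<Rightarrow> real \<Rightarrow> real \<Rightarrow> real \<Rightarrow> real \<Rightarrow> real" where
  "Rlow_of g Z q w e = E_of g Z q * (w + (Z + g*q) * e)"

definition metric_of :: "real \<Rightarrow> real \<Rightarrow> real \<Rightarrow> real \<Rightarrow> real \<Rightarrow> real \<Rightarrow> real \<Rightarrow> real \<Rightarrow> real" where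
  "metric_of g Z q wp wq ep eq rpq = E_of g Z q * (rpq + ep*eq + g / (q * B_of g Z q) *
     (- Z*wp*wq + q^2*(wp*eq + ep*wq) + q^2*(Z + g*q)*ep*eq))"

definition gamma_of :: "real \<Rightarrow> real \<Rightarrow> real \<Rightarrow> real \<Rightarrow> real \<Rightarrow> real" where
  "gamma_of g Z q w e = g * (q^2*e - Z*w) / (q * B_of g Z q)"

definition angular_of :: "real \<Rightarrow> real \<Rightarrow> real \<Rightarrow> real \<Rightarrow> real \<Rightarrow> real \<Rightarrow> real \<Rightarrow> real \<Rightarrow> real" where
  "angular_of g Z q wp wq ep eq rpq =
     metric_of g Z q wp wq ep eq rpq - Rlow_of g Z q wp ep * Rlow_of g Z q wq eq / K2_of g Z q"

definition cartan_of :: "real \<Rightarrow> real \<Rightarrow> real \<Rightarrow> real \<Rightarrow> real \<Rightarrow> real \<Rightarrow> real \<Rightarrow> real \<Rightarrow> real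
    \<Rightarrow> real \<Rightarrow> real \<Rightarrow> real \<Rightarrow> real" where
  "cartan_of g Z q wp wq wr ep eq er rpq rpr rqr = 1/2 *
     (angular_of g Z q wp wq ep eq rpq * gamma_of g Z q wr er
      + angular_of g Z q wp wr ep er rpr * gamma_of g Z q wq eq
      + angular_of g Z q wq wr eq er rqr * gamma_of g Z q wp ep
      - E_of g Z q * g / (q^3 * (B_of g Z q)^2) * (q^2*ep - Z*wp) * (q^2*eq - Z*wq) * (q^2*er - Z*wr))"

lemma quarter_square_less_one:
  fixes g :: real
  assumes "-2 < g" "g < 2"
  shows "g^2/4 < 1"
proof -
  have "0 < (2 - g) * (2 + g)" using assms by simp
  then show ?thesis by (simp add: power2_eq_square algebra_simps)
qed

lemma hh_squared:
  assumes "-2 < g" "g < 2"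
  shows "(hh g)^2 = 1 - g^2/4"
  using quarter_square_less_one[OF assms] by (simp add: hh_def)

lemma hh_pos:
  assumes "-2 < g" "g < 2"
  shows "hh g > 0"
  using quarter_square_less_one[OF assms] by (simp add: hh_def)

lemma B_of_pos:
  assumes "-2 < g" "g < 2" "q > 0"
  shows "B_of g Z q > 0"
proof -
  have "B_of g Z q = (Z + g*q/2)^2 + (1 - g^2/4) * q^2"
    by (simp add: B_of_def power2_eq_square algebra_simps)
  then show ?thesis using quarter_square_less_one[OF assms(1,2)] assms(3) by (simp add: add_nonneg_pos)
qed

lemma E_of_pos: "E_of g Z q > 0"
  by (simp add: E_of_def)

lemma E_of_has_derivative:
  assumes g: "-2 < g" "g < 2" and q: "qt 0 > 0"
    and Z': "(Zt has_real_derivative Z') (at 0)" and q': "(qt has_real_derivative q') (at 0)"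
  shows "((\<lambda>t. E_of g (Zt t) (qt t)) has_real_derivative
     E_of g (Zt 0) (qt 0) * g * (qt 0 * Z' - Zt 0 * q') / B_of g (Zt 0) (qt 0)) (at 0)"
proof -
  define h where "h = hh g"
  define u where "u t = (Zt t + g * qt t / 2) / (h * qt t)" for t
  have h: "h > 0" "h^2 = 1 - g^2/4" using hh_pos[OF g] hh_squared[OF g] by (auto simp: h_def)
  have u': "(u has_real_derivative (qt 0 * Z' - Zt 0 * q') / (h * (qt 0)^2)) (at 0)"
    unfolding u_def
    by (rule derivative_eq_intros Z' q' refl | use h q in \<open>simp add: field_simps power2_eq_square\<close>)+
  have "(h * qt 0)^2 = (1 - g^2/4) * (qt 0)^2"
    by (simp add: power_mult_distrib h(2))
  then have B: "(h * qt 0)^2 + (Zt 0 + g * qt 0 / 2)^2 = B_of g (Zt 0) (qt 0)"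
    by (simp add: B_of_def power2_eq_square algebra_simps)
  have "1 + (u 0)^2 = ((h * qt 0)^2 + (Zt 0 + g * qt 0 / 2)^2) / (h * qt 0)^2"
    using h q by (simp add: u_def field_simps)
  then have "1 + (u 0)^2 = B_of g (Zt 0) (qt 0) / (h * qt 0)^2"
    unfolding B .
  then have "GG g * (inverse (1 + (u 0)^2) * ((qt 0 * Z' - Zt 0 * q') / (h * (qt 0)^2)))
      = g * (qt 0 * Z' - Zt 0 * q') / B_of g (Zt 0) (qt 0)"
    using h q B_of_pos[OF g q] by (simp add: GG_def h_def[symmetric] field_simps power2_eq_square)
  moreover have "((\<lambda>t. exp (GG g * arctan (u t))) has_real_derivative
      exp (GG g * arctan (u 0)) * (GG g * (inverse (1 + (u 0)^2) * ((qt 0 * Z' - Zt 0 * q') / (h * (qt 0)^2))))) (at 0)"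
    by (rule u' derivative_eq_intros refl)+ simp
  ultimately show ?thesis by (simp add: E_of_def u_def h_def mult.assoc)
qed

lemma has_real_derivative_sqrt_quadratic:
  assumes "q > 0"
  shows "((\<lambda>t. sqrt (q^2 + 2*t*w + t^2*c)) has_real_derivative w / q) (at 0)"
proof -
  have "((\<lambda>t. q^2 + 2*t*w + t^2*c) has_real_derivative 2*w) (at 0)"
    by (rule derivative_eq_intros refl)+ simp
  from DERIV_chain2[OF DERIV_real_sqrt this] assms show ?thesis
    by (simp add: field_simps)
qed

lemma E_of_line:
  assumes g: "-2 < g" "g < 2" and q: "q > 0"
  shows "((\<lambda>t. E_of g (Z + t*e) (sqrt (q^2 + 2*t*w + t^2*c))) has_real_derivative
     E_of g Z q * gamma_of g Z q w e) (at 0)"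
proof -
  have "((\<lambda>t. Z + t*e) has_real_derivative e) (at 0)"
    by (rule derivative_eq_intros refl)+ simp
  from E_of_has_derivative[OF g _ this has_real_derivative_sqrt_quadratic[OF q, of w c]] q
  show ?thesis
    using B_of_pos[OF g q, of Z] by (simp add: gamma_of_def field_simps power2_eq_square)
qed

lemma B_of_line:
  assumes q: "q > 0"
  shows "((\<lambda>t. B_of g (Z + t*e) (sqrt (q^2 + 2*t*w + t^2*c))) has_real_derivative
     2*Z*e + g*(w/q)*Z + g*q*e + 2*w) (at 0)"
  unfolding B_of_def
  by (rule has_real_derivative_sqrt_quadratic[OF q] derivative_eq_intros refl
      | use q in \<open>simp add: field_simps power2_eq_square\<close>)+

lemma K2_of_line:
  assumes g: "-2 < g" "g < 2" and q: "q > 0"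
  shows "((\<lambda>t. K2_of g (Z + t*e) (sqrt (q^2 + 2*t*w + t^2*c))) has_real_derivative
     2 * Rlow_of g Z q w e) (at 0)"
  unfolding K2_of_def
  apply (rule B_of_line[OF q] E_of_line[OF g q] derivative_eq_intros refl)+
  using q B_of_pos[OF g q, of Z]
  by (simp add: Rlow_of_def gamma_of_def field_simps power2_eq_square)

lemma Rlow_of_line:
  assumes g: "-2 < g" "g < 2" and q: "q > 0"
  shows "((\<lambda>t. Rlow_of g (Z + t*e) (sqrt (q^2 + 2*t*w + t^2*c)) (w' + t*a) e') has_real_derivative
     metric_of g Z q w w' e e' a) (at 0)"
  unfolding Rlow_of_def
  apply (rule has_real_derivative_sqrt_quadratic[OF q] E_of_line[OF g q] derivative_eq_intros refl)+
  using q B_of_pos[OF g q, of Z]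
  apply (simp add: metric_of_def gamma_of_def field_simps power2_eq_square)
  by (simp add: B_of_def power2_eq_square algebra_simps)

lemma angular_of_eq:
  assumes "-2 < g" "g < 2" "q > 0"
  shows "angular_of g Z q wp wq ep eq rpq = E_of g Z q * (rpq + ep*eq + g / (q * B_of g Z q) *
     (- Z*wp*wq + q^2*(wp*eq + ep*wq) + q^2*(Z + g*q)*ep*eq)
     - (wp + (Z + g*q)*ep) * (wq + (Z + g*q)*eq) / B_of g Z q)"
  using B_of_pos[OF assms, of Z] E_of_pos[of g Z q]
  by (simp add: angular_of_def metric_of_def Rlow_of_def K2_of_def field_simps)

lemma cartan_of_as_derivative:
  fixes Z q g wp wq wr ep eq er rpq apr aqr :: real
  assumes g: "-2 < g" "g < 2" and q: "q > 0"
  defines "B \<equiv> B_of g Z q"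
  defines "k \<equiv> g / (q*B)"
    and "N \<equiv> \<lambda>wp wq ep eq. - Z*wp*wq + q^2*(wp*eq + ep*wq) + q^2*(Z + g*q)*ep*eq"
    and "N' \<equiv> - er*wp*wq - Z*(apr*wq + wp*aqr) + 2*wr*(wp*eq + ep*wq) + q^2*(apr*eq + ep*aqr)
              + (2*wr*(Z + g*q) + q^2*(er + g*wr/q))*ep*eq"
    and "B' \<equiv> 2*Z*er + g*(wr/q)*Z + g*q*er + 2*wr"
  defines "k' \<equiv> - g*((wr/q)*B + q*B') / (q*B)^2"
  shows "2 * cartan_of g Z q wp wq wr ep eq er rpq apr aqr = E_of g Z q *
     (gamma_of g Z q wr er * (rpq + ep*eq + k * N wp wq ep eq) + (k' * N wp wq ep eq + k * N'))"
proof -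
  define L where "L w e = w + (Z + g*q)*e" for w e
  define P where "P w e = q^2*e - Z*w" for w e
  have B: "B > 0" unfolding B_def by (rule B_of_pos[OF g q])
  have gamma: "gamma_of g Z q w e = k * P w e" for w e
    by (simp add: gamma_of_def k_def B_def P_def)
  have derivative: "k' * N wp wq ep eq + k * N' =
      - L wp ep * L wq eq / B * (k * P wr er)
      + (apr + ep*er + k * N wp wr ep er - L wp ep * L wr er / B) * (k * P wq eq)
      + (aqr + eq*er + k * N wq wr eq er - L wq eq * L wr er / B) * (k * P wp ep)
      - g / (q^3 * B^2) * P wp ep * P wq eq * P wr er"
    unfolding N_def L_def P_def k_def N'_def B'_def k'_def
    using q B
    apply (simp add: field_simps power2_eq_square power3_eq_cube)
    unfolding B_def B_of_def by algebra
  have angular: "angular_of g Z q wp wq ep eq rpq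
      = E_of g Z q * (rpq + ep*eq + k * N wp wq ep eq - L wp ep * L wq eq / B)" for wp wq ep eq rpq
    unfolding angular_of_eq[OF g q] by (simp add: k_def N_def L_def B_def)
  have "2 * cartan_of g Z q wp wq wr ep eq er rpq apr aqr = E_of g Z q *
      ((rpq + ep*eq + k * N wp wq ep eq - L wp ep * L wq eq / B) * (k * P wr er)
      + (apr + ep*er + k * N wp wr ep er - L wp ep * L wr er / B) * (k * P wq eq)
      + (aqr + eq*er + k * N wq wr eq er - L wq eq * L wr er / B) * (k * P wp ep)
      - g / (q^3 * B^2) * P wp ep * P wq eq * P wr er)"
    unfolding cartan_of_def angular gamma B_def[symmetric] by (simp add: P_def algebra_simps)
  also have "\<dots> = E_of g Z q *
     (gamma_of g Z q wr er * (rpq + ep*eq + k * N wp wq ep eq) + (k' * N wp wq ep eq + k * N'))"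
    unfolding derivative gamma by (simp add: algebra_simps)
  finally show ?thesis .
qed

lemma metric_of_line:
  assumes g: "-2 < g" "g < 2" and q: "q > 0"
  shows "((\<lambda>t. metric_of g (Z + t*er) (sqrt (q^2 + 2*t*wr + t^2*c)) (wp + t*apr) (wq + t*aqr) ep eq rpq)
     has_real_derivative 2 * cartan_of g Z q wp wq wr ep eq er rpq apr aqr) (at 0)"
proof -
  define B where "B = B_of g Z q"
  define k where "k = g / (q*B)"
  define N where "N = - Z*wp*wq + q^2*(wp*eq + ep*wq) + q^2*(Z + g*q)*ep*eq"
  define N' where "N' = - er*wp*wq - Z*(apr*wq + wp*aqr) + 2*wr*(wp*eq + ep*wq) + q^2*(apr*eq + ep*aqr)
              + (2*wr*(Z + g*q) + q^2*(er + g*wr/q))*ep*eq"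
  define B' where "B' = 2*Z*er + g*(wr/q)*Z + g*q*er + 2*wr"
  define k' where "k' = - g*((wr/q)*B + q*B') / (q*B)^2"
  define qt where "qt t = sqrt (q^2 + 2*t*wr + t^2*c)" for t
  have B: "B > 0" unfolding B_def by (rule B_of_pos[OF g q])
  have qt0: "qt 0 = q" using q by (simp add: qt_def)
  have dqt: "(qt has_real_derivative wr / q) (at 0)"
    unfolding qt_def by (rule has_real_derivative_sqrt_quadratic[OF q])
  have dB: "((\<lambda>t. B_of g (Z + t*er) (qt t)) has_real_derivative B') (at 0)"
    unfolding qt_def B'_def by (rule B_of_line[OF q])
  have dk: "((\<lambda>t. g / (qt t * B_of g (Z + t*er) (qt t))) has_real_derivative k') (at 0)"
    by (rule dqt dB derivative_eq_intros refl | use q B in \<open>simp add: qt0 B_def[symmetric]; fail\<close>)+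
      (use q B in \<open>simp add: qt0 B_def[symmetric] k'_def field_simps power2_eq_square\<close>)
  have dN: "((\<lambda>t. - (Z + t*er) * (wp + t*apr) * (wq + t*aqr) + (qt t)^2 * ((wp + t*apr)*eq + ep*(wq + t*aqr))
      + (qt t)^2 * ((Z + t*er) + g * qt t)*ep*eq) has_real_derivative N') (at 0)"
    by (rule dqt derivative_eq_intros refl)+ (use q in \<open>simp add: qt0 N'_def field_simps power2_eq_square\<close>)
  have dM: "((\<lambda>t. rpq + ep*eq + g / (qt t * B_of g (Z + t*er) (qt t)) *
      (- (Z + t*er) * (wp + t*apr) * (wq + t*aqr) + (qt t)^2 * ((wp + t*apr)*eq + ep*(wq + t*aqr))
      + (qt t)^2 * ((Z + t*er) + g * qt t)*ep*eq)) has_real_derivative k' * N + k * N') (at 0)"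
    by (rule dk dN derivative_eq_intros refl)+ (simp add: qt0 k_def B_def N_def)
  have dE: "((\<lambda>t. E_of g (Z + t*er) (qt t)) has_real_derivative E_of g Z q * gamma_of g Z q wr er) (at 0)"
    unfolding qt_def by (rule E_of_line[OF g q])
  have "((\<lambda>t. metric_of g (Z + t*er) (qt t) (wp + t*apr) (wq + t*aqr) ep eq rpq) has_real_derivative
      E_of g Z q * (gamma_of g Z q wr er * (rpq + ep*eq + k * N) + (k' * N + k * N'))) (at 0)"
    using DERIV_mult[OF dE dM] by (simp add: metric_of_def qt0 k_def B_def N_def algebra_simps)
  then show ?thesis
    unfolding qt_def cartan_of_as_derivative[OF g q] B_def k_def N_def N'_def B'_def k'_def .
qed

lemma cartan_of_eq_form:
  fixes N g Z q :: real
  assumes N: "N > 0" and g: "-2 < g" "g < 2" and q: "q > 0"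
  defines "c \<equiv> \<lambda>w e. N / 2 * gamma_of g Z q w e"
  shows "cartan_of g Z q wp wq wr ep eq er rpq rpr rqr = 1 / N *
     (angular_of g Z q wp wq ep eq rpq * c wr er + angular_of g Z q wp wr ep er rpr * c wq eq
      + angular_of g Z q wq wr eq er rqr * c wp ep
      - 1 / (N^2 / (4 * K2_of g Z q) * g^2) * c wp ep * c wq eq * c wr er)"
proof (cases "g = 0")
  case True
  then show ?thesis by (simp add: cartan_of_def c_def gamma_of_def)
next
  case False
  then show ?thesis
    using N q B_of_pos[OF g q, of Z] E_of_pos[of g Z q]
    by (simp add: cartan_of_def c_def gamma_of_def K2_of_def field_simps power2_eq_square power3_eq_cube)
qed

lemma axis_nth_swap: "axis i (1::real) $ j = axis j 1 $ i"
  by (simp add: axis_def)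

lemma partial_eqI:
  assumes "\<forall>\<^sub>F t in nhds 0. f (S + t *\<^sub>R axis p 1) = F t"
    and "(F has_real_derivative D) (at 0)"
  shows "partial f p S = D"
proof -
  have "((\<lambda>t. f (S + t *\<^sub>R axis p 1)) has_real_derivative D) (at 0)"
    using DERIV_cong_ev[OF refl assms(1) refl] assms(2) by simp
  then show ?thesis unfolding partial_def by (rule DERIV_imp_deriv)
qed

text \<open>The matrix \<open>r\<^sub>a\<^sub>b\<close> padded with zeros in row and column \<open>z\<close>: then
  \<open>q\<^sup>2 = R \<bullet> (rmat rr z *v R)\<close> and \<open>(rmat rr z *v R) $ p = r\<^sub>p\<^sub>b R\<^sup>b\<close>.\<close>

definition rmat :: "('n::finite \<Rightarrow> 'n \<Rightarrow> real) \<Rightarrow> 'n \<Rightarrow> real^'n^'n" where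
  "rmat rr z = (\<chi> a b. if a = z \<or> b = z then 0 else rr a b)"

lemma rmat_row_z [simp]: "rmat rr z $ z $ b = 0"
  by (simp add: rmat_def)

lemma rmat_mult_vector_z [simp]: "(rmat rr z *v x) $ z = 0"
  by (simp add: matrix_vector_mult_def)

lemma rmat_mult_axis_z [simp]: "rmat rr z *v axis z 1 = 0"
  by (simp add: matrix_vector_mult_basis column_def vec_eq_iff rmat_def)

lemma inner_rmat_mult: "T \<bullet> (rmat rr z *v T) = (\<Sum>a\<in>UNIV - {z}. \<Sum>b\<in>UNIV - {z}. rr a b * T$a * T$b)"
proof -
  have "T \<bullet> (rmat rr z *v T) = (\<Sum>a\<in>UNIV. \<Sum>b\<in>UNIV. rmat rr z $ a $ b * T$a * T$b)"
    by (simp add: inner_vec_def matrix_vector_mult_def sum_distrib_left mult_ac)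
  also have "\<dots> = (\<Sum>a\<in>UNIV - {z}. \<Sum>b\<in>UNIV - {z}. rr a b * T$a * T$b)"
    by (simp add: sum.remove[of UNIV z] rmat_def)
  finally show ?thesis .
qed

lemma qf_eq_sqrt_rmat: "qf rr z T = sqrt (T \<bullet> (rmat rr z *v T))"
  by (simp add: qf_def inner_rmat_mult)

lemma rmat_kernel_off_z:
  fixes rr :: "'n::finite \<Rightarrow> 'n \<Rightarrow> real"
  assumes posdef: "\<forall>v :: 'n \<Rightarrow> real. (\<exists>a\<in>UNIV - {z}. v a \<noteq> 0) \<longrightarrow>
                     (\<Sum>a\<in>UNIV - {z}. \<Sum>b\<in>UNIV - {z}. rr a b * v a * v b) > 0"
    and "rmat rr z *v y = 0" and "a \<noteq> z"
  shows "y $ a = 0"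
  using posdef[rule_format, of "\<lambda>a. y $ a"] assms(2,3) by (auto simp: inner_rmat_mult[symmetric])

lemma symmetric_rmat:
  assumes "\<forall>a\<in>UNIV - {z}. \<forall>b\<in>UNIV - {z}. rr a b = rr b a"
  shows "transpose (rmat rr z) = rmat rr z"
  using assms by (auto simp: rmat_def transpose_def vec_eq_iff)

lemma matrix_vector_mult_line:
  fixes M :: "real^'n^'m"
  shows "(M *v (S + t *\<^sub>R axis r 1)) $ p = (M *v S) $ p + t * M $ p $ r"
  by (simp add: matrix_vector_right_distrib matrix_vector_mult_basis matrix_vector_mult_scaleR column_def)

lemma quadratic_form_line:
  fixes M :: "real^'n^'n"
  assumes "transpose M = M"
  shows "(S + t *\<^sub>R axis r 1) \<bullet> (M *v (S + t *\<^sub>R axis r 1))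
    = S \<bullet> (M *v S) + 2 * t * (M *v S) $ r + t^2 * M $ r $ r"
proof -
  have "S \<bullet> (M *v axis r 1) = (\<Sum>i\<in>UNIV. S$i * M$i$r)"
    by (simp add: matrix_vector_mult_basis column_def inner_vec_def)
  also have "\<dots> = (M *v S) $ r"
    using symmetric_matrix_entry[OF assms, of r] by (simp add: matrix_vector_mult_def mult.commute)
  finally have "S \<bullet> (M *v axis r 1) = (M *v S) $ r" .
  then show ?thesis
    by (simp add: matrix_vector_right_distrib matrix_vector_mult_scaleR inner_axis'
        matrix_vector_mult_basis column_def power2_eq_square algebra_simps)
qed

section \<open>Metric and Cartan tensors of the Finsleroid\<close>

locale finsleroid =
  fixes rr :: "'n::finite \<Rightarrow> 'n \<Rightarrow> real" and z :: 'n and g :: real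
  assumes rr_sym: "\<forall>a\<in>UNIV - {z}. \<forall>b\<in>UNIV - {z}. rr a b = rr b a"
    and g_range: "-2 < g" "g < 2"
begin

lemma rmat_sym: "rmat rr z $ p $ q = rmat rr z $ q $ p"
  by (rule symmetric_matrix_entry[OF symmetric_rmat[OF rr_sym]])

lemma qf_squared:
  assumes "qf rr z T > 0"
  shows "(qf rr z T)^2 = T \<bullet> (rmat rr z *v T)"
  using assms unfolding qf_eq_sqrt_rmat by simp

lemma qf_line:
  assumes "qf rr z S > 0"
  shows "qf rr z (S + t *\<^sub>R axis r 1)
    = sqrt ((qf rr z S)^2 + 2 * t * (rmat rr z *v S) $ r + t^2 * rmat rr z $ r $ r)"
  using qf_squared[OF assms] by (simp add: qf_eq_sqrt_rmat quadratic_form_line[OF symmetric_rmat[OF rr_sym]])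

lemma eventually_qf_line_pos:
  assumes "qf rr z S > 0"
  shows "\<forall>\<^sub>F t in nhds 0. qf rr z (S + t *\<^sub>R axis r 1) > 0"
proof -
  define f where "f t = sqrt ((qf rr z S)^2 + 2 * t * (rmat rr z *v S) $ r + t^2 * rmat rr z $ r $ r)" for t
  have "isCont f 0" unfolding f_def by (intro continuous_intros)
  moreover have f0: "f 0 > 0" using assms by (simp add: f_def)
  ultimately have "\<forall>\<^sub>F t in at 0. f t > 0"
    unfolding isCont_def by (rule order_tendstoD(1))
  then have "\<forall>\<^sub>F t in nhds 0. f t > 0"
    using f0 unfolding eventually_at_filter by (auto elim!: eventually_mono)
  then show ?thesis by (simp add: qf_line[OF assms] f_def)
qed

lemma Kf_squared:
  assumes "qf rr z T > 0"
  shows "(Kf rr z g T)^2 = K2_of g (T$z) (qf rr z T)"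
proof -
  have "Bf rr z g T = B_of g (T$z) (qf rr z T)" by (simp add: Bf_def B_of_def algebra_simps)
  moreover have "(Jf rr z g T)^2 = E_of g (T$z) (qf rr z T)"
    using assms by (simp add: Jf_def E_of_def Phif_def Af_def power2_eq_square flip: exp_add)
  ultimately show ?thesis
    using B_of_pos[OF g_range assms, of "T$z"] by (simp add: Kf_def K2_of_def power_mult_distrib)
qed

lemma partial_Kf_squared:
  assumes "qf rr z T > 0"
  shows "partial (\<lambda>T. (Kf rr z g T)^2) p T
    = 2 * Rlow_of g (T$z) (qf rr z T) ((rmat rr z *v T) $ p) (axis z 1 $ p)"
proof (rule partial_eqI)
  show "\<forall>\<^sub>F t in nhds 0. (Kf rr z g (T + t *\<^sub>R axis p 1))^2 = K2_of g (T$z + t * axis z 1 $ p)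
      (sqrt ((qf rr z T)^2 + 2 * t * (rmat rr z *v T) $ p + t^2 * rmat rr z $ p $ p))"
    using eventually_qf_line_pos[OF assms, of p]
    by (rule eventually_mono) (simp add: Kf_squared qf_line[OF assms] axis_nth_swap[of _ z])
  show "((\<lambda>t. K2_of g (T$z + t * axis z 1 $ p)
      (sqrt ((qf rr z T)^2 + 2 * t * (rmat rr z *v T) $ p + t^2 * rmat rr z $ p $ p)))
      has_real_derivative 2 * Rlow_of g (T$z) (qf rr z T) ((rmat rr z *v T) $ p) (axis z 1 $ p)) (at 0)"
    by (rule K2_of_line[OF g_range assms])
qed

lemma metric_eq:
  assumes "qf rr z T > 0"
  shows "metric rr z g p q T = metric_of g (T$z) (qf rr z T) ((rmat rr z *v T) $ p) ((rmat rr z *v T) $ q)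
    (axis z 1 $ p) (axis z 1 $ q) (rmat rr z $ p $ q)"
proof -
  have "partial (\<lambda>S. partial (\<lambda>T. (Kf rr z g T)^2) q S) p T
    = 2 * metric_of g (T$z) (qf rr z T) ((rmat rr z *v T) $ p) ((rmat rr z *v T) $ q)
      (axis z 1 $ p) (axis z 1 $ q) (rmat rr z $ q $ p)"
  proof (rule partial_eqI)
    show "\<forall>\<^sub>F t in nhds 0. partial (\<lambda>T. (Kf rr z g T)^2) q (T + t *\<^sub>R axis p 1)
      = 2 * Rlow_of g (T$z + t * axis z 1 $ p)
        (sqrt ((qf rr z T)^2 + 2 * t * (rmat rr z *v T) $ p + t^2 * rmat rr z $ p $ p))
        ((rmat rr z *v T) $ q + t * rmat rr z $ q $ p) (axis z 1 $ q)"
      using eventually_qf_line_pos[OF assms, of p] by (rule eventually_mono)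
        (simp add: partial_Kf_squared qf_line[OF assms] axis_nth_swap[of _ z] matrix_vector_mult_line)
  qed (intro DERIV_cmult Rlow_of_line[OF g_range assms])
  then show ?thesis by (simp add: metric_def rmat_sym[of q p])
qed

lemma cartan_eq:
  assumes "qf rr z T > 0"
  shows "cartan rr z g p q r T = cartan_of g (T$z) (qf rr z T)
    ((rmat rr z *v T) $ p) ((rmat rr z *v T) $ q) ((rmat rr z *v T) $ r)
    (axis z 1 $ p) (axis z 1 $ q) (axis z 1 $ r) (rmat rr z $ p $ q) (rmat rr z $ p $ r) (rmat rr z $ q $ r)"
proof -
  have "partial (\<lambda>S. metric rr z g p q S) r T = 2 * cartan_of g (T$z) (qf rr z T)
    ((rmat rr z *v T) $ p) ((rmat rr z *v T) $ q) ((rmat rr z *v T) $ r)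
    (axis z 1 $ p) (axis z 1 $ q) (axis z 1 $ r) (rmat rr z $ p $ q) (rmat rr z $ p $ r) (rmat rr z $ q $ r)"
  proof (rule partial_eqI)
    show "\<forall>\<^sub>F t in nhds 0. metric rr z g p q (T + t *\<^sub>R axis r 1)
      = metric_of g (T$z + t * axis z 1 $ r)
        (sqrt ((qf rr z T)^2 + 2 * t * (rmat rr z *v T) $ r + t^2 * rmat rr z $ r $ r))
        ((rmat rr z *v T) $ p + t * rmat rr z $ p $ r) ((rmat rr z *v T) $ q + t * rmat rr z $ q $ r)
        (axis z 1 $ p) (axis z 1 $ q) (rmat rr z $ p $ q)"
      using eventually_qf_line_pos[OF assms, of r] by (rule eventually_mono)
        (simp add: metric_eq qf_line[OF assms] axis_nth_swap[of _ z] matrix_vector_mult_line)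
  qed (rule metric_of_line[OF g_range assms])
  then show ?thesis by (simp add: cartan_def)
qed

lemma angular_eq:
  assumes "qf rr z T > 0"
  shows "angular rr z g p q T = angular_of g (T$z) (qf rr z T) ((rmat rr z *v T) $ p) ((rmat rr z *v T) $ q)
    (axis z 1 $ p) (axis z 1 $ q) (rmat rr z $ p $ q)"
  by (simp add: angular_def angular_of_def metric_eq[OF assms] Rlow_def partial_Kf_squared[OF assms]
      Kf_squared[OF assms])

lemma symmetric_gmat:
  assumes "qf rr z T > 0"
  shows "transpose (gmat rr z g T) = gmat rr z g T"
  by (simp add: vec_eq_iff transpose_def gmat_def metric_eq[OF assms] metric_of_def rmat_sym algebra_simps)

end

section \<open>The vector \<open>C\<^sub>p\<close> at a point\<close>

locale finsleroid_point = finsleroid +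
  fixes R :: "real^'n"
  assumes q_pos: "qf rr z R > 0"
begin

abbreviation "ZR \<equiv> R $ z"
abbreviation "qR \<equiv> qf rr z R"
abbreviation "wR \<equiv> rmat rr z *v R"
abbreviation "BR \<equiv> B_of g ZR qR"
abbreviation "ER \<equiv> E_of g ZR qR"

lemma BR_pos: "BR > 0"
  by (rule B_of_pos[OF g_range q_pos])

lemma wR_inner_R: "wR \<bullet> R = qR^2"
  by (simp add: qf_squared[OF q_pos] inner_commute)

lemma wR_inner_axis_z: "wR \<bullet> axis z 1 = 0"
  by (simp add: inner_axis)

lemma axis_z_inner_R: "axis z 1 \<bullet> R = ZR"
  by (simp add: inner_axis')

lemma BR_eq: "qR^2 + (ZR + g*qR) * ZR = BR"
  by (simp add: B_of_def power2_eq_square algebra_simps)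

lemma Kf_squared_R: "(Kf rr z g R)^2 = BR * ER"
  by (simp add: Kf_squared[OF q_pos] K2_of_def)

lemma gmat_mult_vector:
  "gmat rr z g R *v x = ER *\<^sub>R (rmat rr z *v x + x$z *\<^sub>R axis z 1 + (g / (qR * BR)) *\<^sub>R
     ((qR^2 * x$z - ZR * (wR \<bullet> x)) *\<^sub>R wR + (qR^2 * (wR \<bullet> x + (ZR + g*qR) * x$z)) *\<^sub>R axis z 1))"
  (is "_ = ?rhs")
  unfolding vec_eq_iff
proof
  fix p :: 'n
  define k where "k = g / (qR * BR)"
  define \<alpha> where "\<alpha> = ER * (axis z 1 $ p + k * qR^2 * wR$p + k * qR^2 * (ZR + g*qR) * axis z 1 $ p)"
  define \<beta> where "\<beta> = ER * k * (qR^2 * axis z 1 $ p - ZR * wR$p)"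
  have "gmat rr z g R $ p $ q * x$q = ER * (rmat rr z $ p $ q * x$q) + \<alpha> * (axis z 1 $ q * x$q) + \<beta> * (wR$q * x$q)"
    for q
    using q_pos BR_pos
    by (simp add: gmat_def metric_eq[OF q_pos] metric_of_def \<alpha>_def \<beta>_def k_def field_simps)
  moreover have "(\<Sum>q\<in>UNIV. axis z 1 $ q * x$q) = x$z"
    using inner_axis'[of z 1 x] by (simp add: inner_vec_def)
  ultimately have "(gmat rr z g R *v x) $ p = ER * (rmat rr z *v x) $ p + \<alpha> * x$z + \<beta> * (wR \<bullet> x)"
    by (simp add: matrix_vector_mult_def sum.distrib inner_vec_def flip: sum_distrib_left)
  also have "\<dots> = (ER *\<^sub>R (rmat rr z *v x + x$z *\<^sub>R axis z 1 + k *\<^sub>R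
     ((qR^2 * x$z - ZR * (wR \<bullet> x)) *\<^sub>R wR + (qR^2 * (wR \<bullet> x + (ZR + g*qR) * x$z)) *\<^sub>R axis z 1))) $ p"
    by (simp add: \<alpha>_def \<beta>_def algebra_simps)
  finally show "(gmat rr z g R *v x) $ p = ?rhs $ p"
    unfolding k_def .
qed

abbreviation "RlowR \<equiv> \<chi> p. Rlow rr z g p R"

lemma RlowR_eq: "RlowR = ER *\<^sub>R (wR + (ZR + g*qR) *\<^sub>R axis z 1)"
  by (simp add: vec_eq_iff Rlow_def partial_Kf_squared[OF q_pos] Rlow_of_def algebra_simps)

lemma gmat_mult_R: "gmat rr z g R *v R = RlowR"
  unfolding gmat_mult_vector RlowR_eq wR_inner_R BR_eq
  using q_pos BR_pos by (simp add: scaleR_add_left power2_eq_square)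

text \<open>\<open>cvec\<close> is \<open>N/2\<close> times the gradient of \<open>log J\<^sup>2\<close>; \<open>cuvec\<close> solves \<open>g *v cuvec = cvec\<close>
  within the span of \<open>axis z 1\<close> and \<open>R\<close>.\<close>

definition cvec :: "real^'n" where
  "cvec = (real CARD('n) * g / (2 * qR * BR)) *\<^sub>R (qR^2 *\<^sub>R axis z 1 - ZR *\<^sub>R wR)"

definition cuvec :: "real^'n" where
  "cuvec = (real CARD('n) * g / (2 * ER * qR * BR)) *\<^sub>R (BR *\<^sub>R axis z 1 - (ZR + g*qR) *\<^sub>R R)"

lemma gmat_mult_cuvec: "gmat rr z g R *v cuvec = cvec"
proof -
  define m where "m = real CARD('n) * g / (2 * ER * qR * BR)"
  have rc: "rmat rr z *v cuvec = (- m * (ZR + g*qR)) *\<^sub>R wR"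
    by (simp add: cuvec_def m_def matrix_vector_mult_scaleR matrix_vector_mult_diff_distrib)
  have "BR - (ZR + g*qR) * ZR = qR^2" using BR_eq by linarith
  then have cz: "cuvec $ z = m * qR^2"
    by (simp add: cuvec_def flip: m_def right_diff_distrib)
  have wc: "wR \<bullet> cuvec = - m * (ZR + g*qR) * qR^2"
    by (simp add: cuvec_def m_def wR_inner_R wR_inner_axis_z inner_diff_right)
  have c: "qR^2 * (m * qR^2) - ZR * (- m * (ZR + g*qR) * qR^2) = m * qR^2 * BR"
    unfolding BR_eq[symmetric] by (simp add: algebra_simps)
  have d: "qR^2 * (- m * (ZR + g*qR) * qR^2 + (ZR + g*qR) * (m * qR^2)) = 0"
    by (simp add: algebra_simps)
  show ?thesis
    unfolding gmat_mult_vector rc cz wc c d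
    using q_pos BR_pos E_of_pos[of g ZR qR]
    by (simp add: vec_eq_iff cvec_def m_def field_simps power2_eq_square)
qed

lemma RlowR_inner_R: "RlowR \<bullet> R = (Kf rr z g R)^2"
proof -
  have "RlowR \<bullet> R = ER * (qR^2 + (ZR + g*qR) * ZR)"
    by (simp add: RlowR_eq wR_inner_R axis_z_inner_R inner_add_left)
  then show ?thesis by (simp add: BR_eq Kf_squared_R)
qed

lemma RlowR_inner_cuvec: "RlowR \<bullet> cuvec = 0"
proof -
  have "(wR + (ZR + g*qR) *\<^sub>R axis z 1) \<bullet> (BR *\<^sub>R axis z 1 - (ZR + g*qR) *\<^sub>R R)
      = (ZR + g*qR) * (BR - (qR^2 + (ZR + g*qR) * ZR))"
    by (simp add: inner_add_left inner_diff_right wR_inner_R wR_inner_axis_z axis_z_inner_R algebra_simps)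
  then show ?thesis by (simp add: RlowR_eq cuvec_def BR_eq)
qed

lemma cvec_inner_cuvec: "cvec \<bullet> cuvec = (real CARD('n))^2 / (4 * (Kf rr z g R)^2) * g^2"
proof -
  have "(qR^2 *\<^sub>R axis z 1 - ZR *\<^sub>R wR) \<bullet> (BR *\<^sub>R axis z 1 - (ZR + g*qR) *\<^sub>R R) = qR^2 * BR"
    by (simp add: inner_diff_left inner_diff_right wR_inner_R wR_inner_axis_z axis_z_inner_R algebra_simps)
  then have "cvec \<bullet> cuvec = real CARD('n) * g / (2 * qR * BR) * (real CARD('n) * g / (2 * ER * qR * BR))
      * (qR^2 * BR)"
    by (simp add: cvec_def cuvec_def)
  then show ?thesis
    unfolding Kf_squared_R using q_pos BR_pos E_of_pos[of g ZR qR]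
    by (simp add: field_simps power2_eq_square)
qed

lemma cvec_nth: "cvec $ p = real CARD('n) / 2 * gamma_of g ZR qR (wR $ p) (axis z 1 $ p)"
  using q_pos BR_pos by (simp add: cvec_def gamma_of_def field_simps)

lemma cartan_eq_form:
  "cartan rr z g p q r R = 1 / real CARD('n) *
     (angular rr z g p q R * cvec$r + angular rr z g p r R * cvec$q + angular rr z g q r R * cvec$p
      - 1 / (cvec \<bullet> cuvec) * cvec$p * cvec$q * cvec$r)"
  unfolding cartan_eq[OF q_pos] angular_eq[OF q_pos] cvec_nth cvec_inner_cuvec Kf_squared[OF q_pos]
  by (rule cartan_of_eq_form[OF _ g_range q_pos]) simp

lemma angular_eq_gmat: "angular rr z g p q R = gmat rr z g R $ p $ q - RlowR$p * RlowR$q / (RlowR \<bullet> R)"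
  by (simp add: angular_def gmat_def RlowR_inner_R)

end

locale finsleroid_posdef_point = finsleroid_point +
  assumes rr_posdef: "\<forall>v. (\<exists>a\<in>UNIV - {z}. v a \<noteq> 0) \<longrightarrow>
    (\<Sum>a\<in>UNIV - {z}. \<Sum>b\<in>UNIV - {z}. rr a b * v a * v b) > 0"
begin

lemma kernel_system_determinant:
  defines "k \<equiv> g / (qR * BR)"
  shows "(1 + k * qR^2 * (ZR + g*qR)) * (1 - k * ZR * qR^2) - (k * qR^4) * (k * qR^2) = 1"
proof -
  have "(1 + k * qR^2 * (ZR + g*qR)) * (1 - k * ZR * qR^2) - (k * qR^4) * (k * qR^2)
      = 1 + k * qR^3 * (g - k * qR * BR)"
    unfolding BR_eq[symmetric] by (simp add: algebra_simps power2_eq_square power3_eq_cube power4_eq_xxxx)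
  also have "k * qR * BR = g" using q_pos BR_pos by (simp add: k_def)
  finally show ?thesis by simp
qed

text \<open>Off the coordinate \<open>z\<close>, a kernel vector satisfies \<open>rmat rr z *v (x - \<mu> *\<^sub>R R) = 0\<close>, so
  positive definiteness makes it a multiple of \<open>R\<close> there; what is left is a \<open>2 \<times> 2\<close> system in
  \<open>x $ z\<close> and \<open>\<mu>\<close> of determinant 1.\<close>

lemma gmat_kernel_trivial:
  assumes x: "gmat rr z g R *v x = 0"
  shows "x = 0"
proof -
  define k where "k = g / (qR * BR)"
  define W where "W = wR \<bullet> x"
  define \<mu> where "\<mu> = - k * (qR^2 * x$z - ZR * W)"
  define y where "y = x - \<mu> *\<^sub>R R"
  have V: "rmat rr z *v x + x$z *\<^sub>R axis z 1 + k *\<^sub>R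
      ((qR^2 * x$z - ZR * W) *\<^sub>R wR + (qR^2 * (W + (ZR + g*qR) * x$z)) *\<^sub>R axis z 1) = 0"
    using x E_of_pos[of g ZR qR] by (simp add: gmat_mult_vector k_def W_def)
  have "rmat rr z *v y = 0"
  proof (unfold vec_eq_iff, intro allI)
    fix p
    show "(rmat rr z *v y) $ p = 0 $ p"
    proof (cases "p = z")
      case False
      then show ?thesis
        using arg_cong[OF V, of "\<lambda>v. v $ p"]
        by (simp add: y_def \<mu>_def axis_def matrix_vector_mult_diff_distrib algebra_simps)
    qed simp
  qed
  then have y0: "y $ a = 0" if "a \<noteq> z" for a
    using rmat_kernel_off_z[OF rr_posdef] that by blast
  have "wR \<bullet> y = 0"
    unfolding inner_vec_def
    by (intro sum.neutral ballI) (metis inner_zero_left inner_zero_right rmat_mult_vector_z y0)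
  then have W: "W = \<mu> * qR^2"
    by (simp add: W_def y_def wR_inner_R inner_diff_right)
  have eq1: "(1 + k * qR^2 * (ZR + g*qR)) * x$z + (k * qR^4) * \<mu> = 0"
    using arg_cong[OF V, of "\<lambda>v. v $ z"] unfolding W
    by (simp add: algebra_simps power4_eq_xxxx power2_eq_square)
  have "(k * qR^2) * x$z + (1 - k * ZR * qR^2) * \<mu> = \<mu> + k * (qR^2 * x$z - ZR * W)"
    unfolding W by (simp add: algebra_simps)
  then have eq2: "(k * qR^2) * x$z + (1 - k * ZR * qR^2) * \<mu> = 0"
    by (simp add: \<mu>_def)
  have "x$z = 0" and "\<mu> = 0"
    using linear_system_trivial_solution[OF eq1 eq2] kernel_system_determinant by (simp_all add: k_def)
  then show "x = 0"
    using y0 unfolding vec_eq_iff by (metis diff_zero scaleR_zero_left y_def zero_index)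
qed

lemma gmat_invertible: "invertible (gmat rr z g R)"
  using gmat_kernel_trivial by (simp add: invertible_iff_kernel_trivial)

lemma Clow_eq_cvec: "Clow rr z g p R = cvec $ p"
proof (cases "g = 0")
  case True
  have "cvec = 0" unfolding cvec_def using True by simp
  then show ?thesis by (simp add: Clow_def cartan_eq_form)
next
  case False
  have K: "(Kf rr z g R)^2 > 0" using BR_pos E_of_pos[of g ZR qR] by (simp add: Kf_squared_R)
  show ?thesis
    unfolding Clow_def ginv_def
  proof (rule contraction_of_cartan_form[OF gmat_invertible symmetric_gmat[OF q_pos]
        gmat_mult_R _ gmat_mult_cuvec RlowR_inner_cuvec])
    show "RlowR \<bullet> R \<noteq> 0" using K by (simp add: RlowR_inner_R)
    show "cvec \<bullet> cuvec \<noteq> 0" using K False by (simp add: cvec_inner_cuvec)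
  qed (rule angular_eq_gmat, rule cartan_eq_form)
qed

lemma Cup_eq_cuvec: "Cup rr z g p R = cuvec $ p"
proof -
  have "matrix_inv (gmat rr z g R) *v cvec = cuvec"
    by (rule matrix_inv_mult_vector[OF gmat_invertible gmat_mult_cuvec])
  then show ?thesis
    by (simp add: Cup_def ginv_def Clow_eq_cvec matrix_vector_mult_def vec_eq_iff)
qed

end

theorem theorem2p1:
  fixes rr :: "'n::finite \<Rightarrow> 'n \<Rightarrow> real" and z :: 'n and gg :: real and R :: "real^'n"
  assumes N2: "CARD('n) \<ge> 2"
    and sym: "\<forall>a\<in>UNIV - {z}. \<forall>b\<in>UNIV - {z}. rr a b = rr b a"
    and posdef: "\<forall>v :: 'n \<Rightarrow> real. (\<exists>a\<in>UNIV - {z}. v a \<noteq> 0) \<longrightarrow>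
                   (\<Sum>a\<in>UNIV - {z}. \<Sum>b\<in>UNIV - {z}. rr a b * v a * v b) > 0"
    and g_range: "-2 < gg" "gg < 2"
    and q_pos: "qf rr z R > 0"
  shows "(\<Sum>t\<in>UNIV. Clow rr z gg t R * Cup rr z gg t R)
           = (real CARD('n))^2 / (4 * (Kf rr z gg R)^2) * gg^2
         \<and> (gg \<noteq> 0 \<longrightarrow> (\<forall>p q r. cartan rr z gg p q r R =
           1 / real CARD('n) *
             (angular rr z gg p q R * Clow rr z gg r R
              + angular rr z gg p r R * Clow rr z gg q R
              + angular rr z gg q r R * Clow rr z gg p R
              - 1 / (\<Sum>s\<in>UNIV. Clow rr z gg s R * Cup rr z gg s R)
                  * Clow rr z gg p R * Clow rr z gg q R * Clow rr z gg r R)))"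
proof -
  interpret finsleroid_posdef_point rr z gg R
    using sym posdef g_range q_pos by unfold_locales
  have contraction: "(\<Sum>t\<in>UNIV. Clow rr z gg t R * Cup rr z gg t R) = cvec \<bullet> cuvec"
    by (simp add: Clow_eq_cvec Cup_eq_cuvec inner_vec_def)
  show ?thesis
    unfolding contraction unfolding Clow_eq_cvec
    using cvec_inner_cuvec cartan_eq_form by blast
qed
end
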